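(* If $X$ is a proper Gromov hyperbolic geodesic metric space, then the quotient $[\partial_hX]_s$ of the horofunction boundary by the sublinear difference relation is homeomorphic to the Gromov boundary $\partial X$.
   Context: With basepoint $o$, $b_y(x)=d(x,y)-d(o,y)$; the horofunction boundary $\partial_hX$ consists of pointwise limits $b_\xi$ of $b_{y_n}$ along unbounded sequences (compact-open topology). Two points $\xi,\eta\in\partial_hX$ are sublinearly equivalent if $\lim_{n\to\infty}\sup_{d(o,x)\ge n}|b_\xi(x)-b_\eta(x)|/d(o,x)=0$; $[\partial_hX]_s$ is the quotient space. *)

theory Defs
  imports "HOL-Analysis.Analysis"
begin

definition proper_metric :: "'a::metric_space itself \<Rightarrow> bool" where
  "proper_metric _ \<longleftrightarrow> (\<forall>(x::'a) r. compact (cball x r))"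

definition geodesic_metric :: "'a::metric_space itself \<Rightarrow> bool" where
  "geodesic_metric _ \<longleftrightarrow> (\<forall>x y::'a. \<exists>\<gamma>::real \<Rightarrow> 'a. \<gamma> 0 = x \<and> \<gamma> (dist x y) = y \<and>
      (\<forall>s\<in>{0..dist x y}. \<forall>t\<in>{0..dist x y}. dist (\<gamma> s) (\<gamma> t) = \<bar>s - t\<bar>))"

definition gromov_product :: "'a::metric_space \<Rightarrow> 'a \<Rightarrow> 'a \<Rightarrow> real" where
  "gromov_product w x y = (dist w x + dist w y - dist x y) / 2"

definition gromov_hyperbolic :: "'a::metric_space itself \<Rightarrow> bool" where
  "gromov_hyperbolic _ \<longleftrightarrow> (\<exists>\<delta>\<ge>0. \<forall>w x y z::'a.
      gromov_product w x z \<ge> min (gromov_product w x y) (gromov_product w y z) - \<delta>)"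

definition busemann :: "'a::metric_space \<Rightarrow> 'a \<Rightarrow> 'a \<Rightarrow> real" where
  "busemann p y x = dist x y - dist p y"

definition horofunction_boundary :: "'a::metric_space \<Rightarrow> ('a \<Rightarrow> real) set" where
  "horofunction_boundary p = {\<xi>. \<exists>y::nat \<Rightarrow> 'a.
      filterlim (\<lambda>n. dist p (y n)) at_top sequentially \<and>
      (\<forall>x. (\<lambda>n. busemann p (y n) x) \<longlonglongrightarrow> \<xi> x)}"

definition compact_open_topology :: "('a::topological_space \<Rightarrow> 'b::topological_space) topology" where
  "compact_open_topology = topology_generated_by {{f. f ` K \<subseteq> U} | K U. compact K \<and> open U}"

definition horofunction_topology :: "'a::metric_space \<Rightarrow> ('a \<Rightarrow> real) topology" where
  "horofunction_topology p = subtopology compact_open_topology (horofunction_boundary p)"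

text \<open>Sublinear equivalence: the limit over n of the supremum over d(p,x) >= n of
  |xi x - eta x| / d(p,x) is 0, written out with epsilon and N.\<close>
definition sublinear_equiv :: "'a::metric_space \<Rightarrow> ('a \<Rightarrow> real) \<Rightarrow> ('a \<Rightarrow> real) \<Rightarrow> bool" where
  "sublinear_equiv p \<xi> \<eta> \<longleftrightarrow> (\<forall>\<epsilon>>0. \<exists>N::nat. \<forall>n\<ge>N. \<forall>x. dist p x \<ge> real n \<longrightarrow>
      \<bar>\<xi> x - \<eta> x\<bar> / dist p x \<le> \<epsilon>)"

definition equiv_class_in :: "'a topology \<Rightarrow> ('a \<Rightarrow> 'a \<Rightarrow> bool) \<Rightarrow> 'a \<Rightarrow> 'a set" where
  "equiv_class_in T R x = {y \<in> topspace T. R x y}"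

definition quotient_topology :: "'a topology \<Rightarrow> ('a \<Rightarrow> 'a \<Rightarrow> bool) \<Rightarrow> 'a set topology" where
  "quotient_topology T R = topology (\<lambda>U. U \<subseteq> equiv_class_in T R ` topspace T \<and>
      openin T {x \<in> topspace T. equiv_class_in T R x \<in> U})"

definition converges_at_infinity :: "'a::metric_space \<Rightarrow> (nat \<Rightarrow> 'a) \<Rightarrow> bool" where
  "converges_at_infinity p x \<longleftrightarrow> (\<forall>M. \<exists>N. \<forall>i\<ge>N. \<forall>j\<ge>N. gromov_product p (x i) (x j) \<ge> M)"

definition seq_equiv :: "'a::metric_space \<Rightarrow> (nat \<Rightarrow> 'a) \<Rightarrow> (nat \<Rightarrow> 'a) \<Rightarrow> bool" where
  "seq_equiv p x y \<longleftrightarrow> (\<forall>M. \<exists>N. \<forall>i\<ge>N. \<forall>j\<ge>N. gromov_product p (x i) (y j) \<ge> M)"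

definition gromov_boundary :: "'a::metric_space \<Rightarrow> (nat \<Rightarrow> 'a) set set" where
  "gromov_boundary p = (\<lambda>x. {y. converges_at_infinity p y \<and> seq_equiv p x y}) ` {x. converges_at_infinity p x}"

text \<open>Basic neighbourhoods V(xi,r): classes eta containing sequences x in xi, y in eta with
  liminf_{i,j} (x_i . y_j)_p >= r.\<close>
definition gromov_nbhd :: "'a::metric_space \<Rightarrow> (nat \<Rightarrow> 'a) set \<Rightarrow> real \<Rightarrow> (nat \<Rightarrow> 'a) set set" where
  "gromov_nbhd p \<xi> r = {\<eta> \<in> gromov_boundary p. \<exists>x\<in>\<xi>. \<exists>y\<in>\<eta>.
      \<forall>\<epsilon>>0. \<exists>N. \<forall>i\<ge>N. \<forall>j\<ge>N. gromov_product p (x i) (y j) \<ge> r - \<epsilon>}"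

definition gromov_boundary_topology :: "'a::metric_space \<Rightarrow> (nat \<Rightarrow> 'a) set topology" where
  "gromov_boundary_topology p = topology (\<lambda>U. U \<subseteq> gromov_boundary p \<and>
      (\<forall>\<xi>\<in>U. \<exists>r. gromov_nbhd p \<xi> r \<subseteq> U))"

lemma gromov_nbhd_mono: "r \<le> s \<Longrightarrow> gromov_nbhd p \<xi> s \<subseteq> gromov_nbhd p \<xi> r"
proof
  fix \<eta> assume "r \<le> s" "\<eta> \<in> gromov_nbhd p \<xi> s"
  then show "\<eta> \<in> gromov_nbhd p \<xi> r"
  proof -
    from \<open>\<eta> \<in> gromov_nbhd p \<xi> s\<close> obtain x y where xy: "\<eta> \<in> gromov_boundary p" "x \<in> \<xi>" "y \<in> \<eta>"
      "\<forall>\<epsilon>>0. \<exists>N. \<forall>i\<ge>N. \<forall>j\<ge>N. gromov_product p (x i) (y j) \<ge> s - \<epsilon>"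
      unfolding gromov_nbhd_def by blast
    have "\<forall>\<epsilon>>0. \<exists>N. \<forall>i\<ge>N. \<forall>j\<ge>N. gromov_product p (x i) (y j) \<ge> r - \<epsilon>"
    proof (intro allI impI)
      fix \<epsilon> :: real assume "\<epsilon> > 0"
      with xy(4) obtain N where "\<forall>i\<ge>N. \<forall>j\<ge>N. gromov_product p (x i) (y j) \<ge> s - \<epsilon>" by blast
      with \<open>r \<le> s\<close> show "\<exists>N. \<forall>i\<ge>N. \<forall>j\<ge>N. gromov_product p (x i) (y j) \<ge> r - \<epsilon>"
        by (meson diff_right_mono order_trans)
    qed
    with xy show ?thesis unfolding gromov_nbhd_def by blast
  qed
qed

lemma istopology_gromov:
  "istopology (\<lambda>U. U \<subseteq> gromov_boundary p \<and> (\<forall>\<xi>\<in>U. \<exists>r. gromov_nbhd p \<xi> r \<subseteq> U))"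
proof -
  have inter: "S \<inter> T \<subseteq> gromov_boundary p \<and> (\<forall>\<xi>\<in>S \<inter> T. \<exists>r. gromov_nbhd p \<xi> r \<subseteq> S \<inter> T)"
    if S: "S \<subseteq> gromov_boundary p \<and> (\<forall>\<xi>\<in>S. \<exists>r. gromov_nbhd p \<xi> r \<subseteq> S)"
    and T: "T \<subseteq> gromov_boundary p \<and> (\<forall>\<xi>\<in>T. \<exists>r. gromov_nbhd p \<xi> r \<subseteq> T)" for S T
  proof (intro conjI ballI)
    show "S \<inter> T \<subseteq> gromov_boundary p" using S by blast
    fix \<xi> assume "\<xi> \<in> S \<inter> T"
    then obtain r s where "gromov_nbhd p \<xi> r \<subseteq> S" "gromov_nbhd p \<xi> s \<subseteq> T" using S T by blast
    then have "gromov_nbhd p \<xi> (max r s) \<subseteq> S \<inter> T"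
      using gromov_nbhd_mono[of r "max r s" p \<xi>] gromov_nbhd_mono[of s "max r s" p \<xi>] by auto
    then show "\<exists>r. gromov_nbhd p \<xi> r \<subseteq> S \<inter> T" by blast
  qed
  have union: "\<Union>K \<subseteq> gromov_boundary p \<and> (\<forall>\<xi>\<in>\<Union>K. \<exists>r. gromov_nbhd p \<xi> r \<subseteq> \<Union>K)"
    if K: "\<forall>U\<in>K. U \<subseteq> gromov_boundary p \<and> (\<forall>\<xi>\<in>U. \<exists>r. gromov_nbhd p \<xi> r \<subseteq> U)" for K
  proof (intro conjI ballI)
    show "\<Union>K \<subseteq> gromov_boundary p" using K by blast
    fix \<xi> assume "\<xi> \<in> \<Union>K"
    then obtain U where "U \<in> K" "\<xi> \<in> U" by blast
    with K obtain r where "gromov_nbhd p \<xi> r \<subseteq> U" by blast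
    with \<open>U \<in> K\<close> show "\<exists>r. gromov_nbhd p \<xi> r \<subseteq> \<Union>K" by blast
  qed
  show ?thesis unfolding istopology_def
    using inter union by blast
qed

end

theory Submission
  imports Defs
begin

text \<open>For a horofunction \<open>h\<close> put \<open>(z|h)\<^sub>p = (d(p,z) - h z) / 2\<close>; it is the limit of the
  Gromov products \<open>(z|y\<^sub>n)\<^sub>p\<close> along any sequence \<open>y\<^sub>n\<close> defining \<open>h\<close>, so it obeys the
  four-point inequalities of a \<open>\<delta>\<close>-hyperbolic space. The sequences \<open>x\<^sub>i\<close> converging at
  infinity with \<open>(x\<^sub>i|h)\<^sub>p \<rightarrow> \<infinity>\<close> form a single point, the endpoint of \<open>h\<close>, of the Gromov
  boundary. In a proper geodesic space it is not empty: geodesics from \<open>p\<close> to the \<open>y\<^sub>n\<close>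
  accumulate to points \<open>z\<^sub>i\<close> with \<open>d(p,z\<^sub>i) = i\<close> and \<open>h z\<^sub>i = -i\<close>.

  Two horofunctions with a common endpoint differ by at most \<open>4\<delta>\<close>, hence are sublinearly
  equivalent; conversely, sublinear equivalence to \<open>h\<close> forces \<open>(z\<^sub>i|h')\<^sub>p \<ge> i/2\<close>. So the
  endpoint map has exactly the sublinear classes as fibres, and it remains to see that it is
  a quotient map onto the Gromov boundary. It is onto by an Arzela-Ascoli argument for
  Busemann functions, and continuous because the value of \<open>h'\<close> at a single point \<open>z\<^sub>i\<close>
  controls how deep the endpoint of \<open>h'\<close> lies in a Gromov neighbourhood of that of \<open>h\<close>.
  Finally, a set of boundary points with open preimage is open, because the horofunction
  boundary is sequentially compact and endpoints of limits are limits of endpoints.\<close>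

section \<open>Gromov products and horofunctions\<close>

lemma gromov_product_commute: "gromov_product w x y = gromov_product w y x"
  unfolding gromov_product_def by (simp add: dist_commute)

lemma gromov_product_self [simp]: "gromov_product w x x = dist w x"
  unfolding gromov_product_def by simp

lemma busemann_basepoint [simp]: "busemann p y p = 0"
  unfolding busemann_def by (simp add: dist_commute)

lemma busemann_eq_gromov_product: "busemann p y z = dist p z - 2 * gromov_product p z y"
  unfolding busemann_def gromov_product_def by (simp add: dist_commute field_simps)

lemma lipschitz_busemann: "1-lipschitz_on UNIV (busemann p y)"
proof (rule lipschitz_onI)
  fix x x' :: 'a
  show "dist (busemann p y x) (busemann p y x') \<le> 1 * dist x x'"
    using dist_triangle[of x y x'] dist_triangle[of x' y x]
    by (simp add: busemann_def dist_real_def dist_commute abs_le_iff)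
qed simp

lemma lipschitz_on_pointwise_limit:
  fixes f :: "nat \<Rightarrow> 'a::metric_space \<Rightarrow> 'b::metric_space"
  assumes "\<And>n. L-lipschitz_on U (f n)" and "\<And>x. x \<in> U \<Longrightarrow> (\<lambda>n. f n x) \<longlonglongrightarrow> g x"
  shows "L-lipschitz_on U g"
proof (rule lipschitz_onI)
  fix x y assume "x \<in> U" "y \<in> U"
  then have "(\<lambda>n. dist (f n x) (f n y)) \<longlonglongrightarrow> dist (g x) (g y)"
    by (intro tendsto_dist assms)
  moreover have "\<forall>n. dist (f n x) (f n y) \<le> L * dist x y"
    using lipschitz_onD[OF assms(1)] \<open>x \<in> U\<close> \<open>y \<in> U\<close> by blast
  ultimately show "dist (g x) (g y) \<le> L * dist x y"
    by (meson LIMSEQ_le_const2)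
qed (use lipschitz_on_nonneg[OF assms(1)] in blast)

lemma horofunction_boundaryE:
  assumes "h \<in> horofunction_boundary p"
  obtains y where "filterlim (\<lambda>n. dist p (y n)) at_top sequentially"
    and "\<And>x. (\<lambda>n. busemann p (y n) x) \<longlonglongrightarrow> h x"
  using assms unfolding horofunction_boundary_def by blast

lemma lipschitz_horofunction: "h \<in> horofunction_boundary p \<Longrightarrow> 1-lipschitz_on UNIV h"
  by (erule horofunction_boundaryE) (rule lipschitz_on_pointwise_limit[OF lipschitz_busemann])

lemma horofunction_basepoint: "h \<in> horofunction_boundary p \<Longrightarrow> h p = 0"
proof (erule horofunction_boundaryE)
  fix y assume "\<And>x. (\<lambda>n. busemann p (y n) x) \<longlonglongrightarrow> h x"
  from this[of p] show "h p = 0" by (simp add: LIMSEQ_const_iff)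
qed

definition horofunction_product :: "'a::metric_space \<Rightarrow> ('a \<Rightarrow> real) \<Rightarrow> 'a \<Rightarrow> real" where
  "horofunction_product p h z = (dist p z - h z) / 2"

lemma gromov_product_tendsto_horofunction_product:
  assumes "\<And>x. (\<lambda>n. busemann p (y n) x) \<longlonglongrightarrow> h x"
  shows "(\<lambda>n. gromov_product p z (y n)) \<longlonglongrightarrow> horofunction_product p h z"
proof -
  have "(\<lambda>n. (dist p z - busemann p (y n) z) / 2) \<longlonglongrightarrow> horofunction_product p h z"
    unfolding horofunction_product_def by (auto intro!: tendsto_intros assms)
  then show ?thesis by (simp add: busemann_eq_gromov_product)
qed

lemma sublinear_equiv_if_bounded_diff:
  assumes "\<And>x. \<bar>\<xi> x - \<eta> x\<bar> \<le> C"
  shows "sublinear_equiv p \<xi> \<eta>"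
  unfolding sublinear_equiv_def
proof (intro allI impI)
  fix \<epsilon> :: real assume "\<epsilon> > 0"
  show "\<exists>N. \<forall>n\<ge>N. \<forall>x. real n \<le> dist p x \<longrightarrow> \<bar>\<xi> x - \<eta> x\<bar> / dist p x \<le> \<epsilon>"
  proof (intro exI allI impI)
    fix n x assume "nat \<lceil>C / \<epsilon>\<rceil> + 1 \<le> n" "real n \<le> dist p x"
    then have "1 \<le> dist p x" "C / \<epsilon> \<le> dist p x" by linarith+
    then have "\<bar>\<xi> x - \<eta> x\<bar> \<le> \<epsilon> * dist p x"
      using assms[of x] \<open>\<epsilon> > 0\<close> by (simp add: divide_le_eq mult.commute)
    then show "\<bar>\<xi> x - \<eta> x\<bar> / dist p x \<le> \<epsilon>"
      using \<open>1 \<le> dist p x\<close> \<open>\<epsilon> > 0\<close> by (simp add: divide_le_eq)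
  qed
qed

section \<open>Compact-open and quotient topologies\<close>

lemma topspace_compact_open_topology [simp]:
  "topspace (compact_open_topology :: ('a::topological_space \<Rightarrow> 'b::topological_space) topology) = UNIV"
proof -
  have "UNIV \<in> {{f::'a \<Rightarrow> 'b. f ` K \<subseteq> U} | K U. compact K \<and> open U}"
    by blast
  then show ?thesis unfolding compact_open_topology_def topology_generated_by_topspace by blast
qed

lemma openin_compact_open_topology_eval:
  assumes "open V"
  shows "openin compact_open_topology {f::'a::topological_space \<Rightarrow> 'b::topological_space. f z \<in> V}"
proof -
  have "{f. f z \<in> V} \<in> {{f::'a \<Rightarrow> 'b. f ` K \<subseteq> U} | K U. compact K \<and> open U}"
    using assms by (intro CollectI exI[of _ "{z}"] exI[of _ V]) auto
  then show ?thesis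
    unfolding compact_open_topology_def openin_topology_generated_by_iff
    by (rule generate_topology_on.Basis)
qed

lemma limitin_compact_open_topology:
  fixes f :: "'i \<Rightarrow> 'a::topological_space \<Rightarrow> 'b::metric_space"
  assumes h: "continuous_on UNIV h" and unif: "\<And>K. compact K \<Longrightarrow> uniform_limit K f h F"
  shows "limitin compact_open_topology f h F"
proof -
  have "eventually (\<lambda>n. f n \<in> W) F" if "openin compact_open_topology W" "h \<in> W" for W
    using that unfolding compact_open_topology_def openin_topology_generated_by_iff
  proof (induction rule: generate_topology_on.induct)
    case Empty
    then show ?case by simp
  next
    case (Int a b)
    then show ?case by (simp add: eventually_conj_iff)
  next
    case (UN \<K>)
    then obtain W where "W \<in> \<K>" "h \<in> W" by blast
    with UN have "eventually (\<lambda>n. f n \<in> W) F" by blast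
    then show ?case by (rule eventually_mono) (use \<open>W \<in> \<K>\<close> in blast)
  next
    case (Basis W)
    then obtain K U where W: "W = {f. f ` K \<subseteq> U}" and K: "compact K" and U: "open U" by blast
    have "compact (h ` K)"
      using K continuous_on_subset[OF h] by (intro compact_continuous_image) auto
    then obtain \<epsilon> where "\<epsilon> > 0" and \<epsilon>: "(\<Union>x\<in>h ` K. ball x \<epsilon>) \<subseteq> U"
      using compact_subset_open_imp_ball_epsilon_subset U Basis(2) W by blast
    have "eventually (\<lambda>n. \<forall>x\<in>K. dist (f n x) (h x) < \<epsilon>) F"
      using uniform_limitD[OF unif[OF K] \<open>\<epsilon> > 0\<close>] .
    then show ?case
      by (rule eventually_mono) (use \<epsilon> in \<open>force simp: W dist_commute\<close>)
  qed
  then show ?thesis unfolding limitin_def by simp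
qed

lemma topspace_horofunction_topology [simp]:
  "topspace (horofunction_topology p) = horofunction_boundary p"
  unfolding horofunction_topology_def by simp

lemma istopology_quotient_topology:
  "istopology (\<lambda>U. U \<subseteq> equiv_class_in X R ` topspace X \<and>
      openin X {x \<in> topspace X. equiv_class_in X R x \<in> U})"
proof -
  have "{x \<in> topspace X. equiv_class_in X R x \<in> S \<inter> U} =
      {x \<in> topspace X. equiv_class_in X R x \<in> S} \<inter> {x \<in> topspace X. equiv_class_in X R x \<in> U}"
    for S U by blast
  moreover have "{x \<in> topspace X. equiv_class_in X R x \<in> \<Union>\<K>} =
      (\<Union>S\<in>\<K>. {x \<in> topspace X. equiv_class_in X R x \<in> S})" for \<K> by blast
  ultimately show ?thesis
    unfolding istopology_def by (auto intro!: openin_Int openin_Union)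
qed

lemma openin_quotient_topology:
  "openin (quotient_topology X R) U \<longleftrightarrow>
     U \<subseteq> equiv_class_in X R ` topspace X \<and> openin X {x \<in> topspace X. equiv_class_in X R x \<in> U}"
  unfolding quotient_topology_def topology_inverse'[OF istopology_quotient_topology] ..

lemma topspace_quotient_topology:
  "topspace (quotient_topology X R) = equiv_class_in X R ` topspace X"
proof (rule antisym)
  show "topspace (quotient_topology X R) \<subseteq> equiv_class_in X R ` topspace X"
    using openin_quotient_topology[of X R "topspace (quotient_topology X R)"] by simp
  have "openin (quotient_topology X R) (equiv_class_in X R ` topspace X)"
  proof -
    have "{x \<in> topspace X. equiv_class_in X R x \<in> equiv_class_in X R ` topspace X} = topspace X"
      by blast
    then show ?thesis unfolding openin_quotient_topology by simp
  qed
  then show "equiv_class_in X R ` topspace X \<subseteq> topspace (quotient_topology X R)"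
    by (rule openin_subset)
qed

lemma quotient_map_equiv_class_in:
  "quotient_map X (quotient_topology X R) (equiv_class_in X R)"
  unfolding quotient_map_def topspace_quotient_topology openin_quotient_topology by auto

lemma quotient_topology_homeomorphic_space:
  assumes f: "quotient_map X Y f"
    and R: "\<And>x y. x \<in> topspace X \<Longrightarrow> y \<in> topspace X \<Longrightarrow> R x y \<longleftrightarrow> f x = f y"
  shows "quotient_topology X R homeomorphic_space Y"
proof -
  let ?q = "equiv_class_in X R"
  define g where "g C = f (SOME x. x \<in> C)" for C
  have q: "?q x = {y \<in> topspace X. f x = f y}" if "x \<in> topspace X" for x
    using R that unfolding equiv_class_in_def by blast
  have g: "g (?q x) = f x" if "x \<in> topspace X" for x
  proof -
    have "x \<in> ?q x" using q that by blast
    then have "(SOME y. y \<in> ?q x) \<in> ?q x" by (rule someI)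
    then show ?thesis unfolding g_def using q that by auto
  qed
  have "quotient_map X Y (g \<circ> ?q)"
    by (rule quotient_map_eq[OF f]) (simp add: g)
  then have "quotient_map (quotient_topology X R) Y g"
    using quotient_map_compose_eq[OF quotient_map_equiv_class_in] by blast
  moreover have "?q x = ?q y" if "x \<in> topspace X" "y \<in> topspace X" "g (?q x) = g (?q y)" for x y
  proof -
    have "f x = f y" using that g[of x] g[of y] by argo
    then show ?thesis using that q by simp
  qed
  then have "inj_on g (topspace (quotient_topology X R))"
    unfolding topspace_quotient_topology by (auto intro!: inj_onI)
  ultimately show ?thesis
    unfolding homeomorphic_space homeomorphic_map_def by blast
qed

lemma openin_gromov_boundary_topology:
  "openin (gromov_boundary_topology p) U \<longleftrightarrow>
     U \<subseteq> gromov_boundary p \<and> (\<forall>\<xi>\<in>U. \<exists>r. gromov_nbhd p \<xi> r \<subseteq> U)"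
  unfolding gromov_boundary_topology_def topology_inverse'[OF istopology_gromov] ..

lemma topspace_gromov_boundary_topology [simp]:
  "topspace (gromov_boundary_topology p) = gromov_boundary p"
proof (rule antisym)
  show "topspace (gromov_boundary_topology p) \<subseteq> gromov_boundary p"
    using openin_gromov_boundary_topology[of p "topspace (gromov_boundary_topology p)"] by simp
  have "openin (gromov_boundary_topology p) (gromov_boundary p)"
    unfolding openin_gromov_boundary_topology gromov_nbhd_def by blast
  then show "gromov_boundary p \<subseteq> topspace (gromov_boundary_topology p)"
    by (rule openin_subset)
qed

section \<open>Horofunctions on proper spaces\<close>

lemma compact_cball_proper:
  "proper_metric TYPE('a::metric_space) \<Longrightarrow> compact (cball (x::'a) r)"
  unfolding proper_metric_def by blast

lemma proper_metric_separable:
  assumes "proper_metric TYPE('a::metric_space)"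
  obtains D :: "'a::metric_space set" where "countable D" and "closure D = UNIV"
proof -
  fix p :: 'a
  define F where "F n m = (SOME k. finite k \<and>
      cball p (real n) \<subseteq> (\<Union>c\<in>k. ball c (inverse (real (Suc m)))))" for n m
  have "\<exists>k. finite k \<and> cball p (real n) \<subseteq> (\<Union>c\<in>k. ball c (inverse (real (Suc m))))" for n m
    using compact_cball_proper[OF assms] unfolding compact_eq_totally_bounded by simp
  then have F: "finite (F n m)"
    and cover: "cball p (real n) \<subseteq> (\<Union>c\<in>F n m. ball c (inverse (real (Suc m))))" for n m
    unfolding F_def by (metis (no_types, lifting) someI_ex)+
  define D where "D = (\<Union>n m. F n m)"
  have "countable D"
    unfolding D_def using F by (simp add: countable_finite)
  have "x \<in> closure D" for x
    unfolding closure_approachable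
  proof (intro allI impI)
    fix \<epsilon> :: real assume "\<epsilon> > 0"
    then obtain m where m: "inverse (real (Suc m)) < \<epsilon>"
      using reals_Archimedean by blast
    define n where "n = nat \<lceil>dist p x\<rceil>"
    have "x \<in> cball p (real n)" unfolding n_def by simp
    then have "x \<in> (\<Union>c\<in>F n m. ball c (inverse (real (Suc m))))" by (rule subsetD[OF cover])
    then obtain c where "c \<in> F n m" "dist c x < inverse (real (Suc m))" by auto
    moreover have "c \<in> D" unfolding D_def using \<open>c \<in> F n m\<close> by blast
    ultimately show "\<exists>c\<in>D. dist c x < \<epsilon>" using m by (meson less_trans)
  qed
  then have "closure D = UNIV" by blast
  with \<open>countable D\<close> show ?thesis using that by blast
qed

lemma uniform_limit_if_lipschitz_pointwise:
  fixes f :: "nat \<Rightarrow> 'a::metric_space \<Rightarrow> 'b::metric_space"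
  assumes K: "compact K" and lip: "\<And>n. L-lipschitz_on K (f n)"
    and lim: "\<And>x. x \<in> K \<Longrightarrow> (\<lambda>n. f n x) \<longlonglongrightarrow> g x"
  shows "uniform_limit K f g sequentially"
proof (rule uniform_limitI)
  fix e :: real assume "e > 0"
  have "0 \<le> L" by (rule lipschitz_on_nonneg[OF lip])
  have g: "L-lipschitz_on K g" by (rule lipschitz_on_pointwise_limit[OF lip lim])
  define d where "d = e / (3 * (L + 1))"
  have "d > 0" using \<open>e > 0\<close> \<open>0 \<le> L\<close> unfolding d_def by simp
  have "L * d < e / 3"
    using \<open>e > 0\<close> \<open>0 \<le> L\<close> unfolding d_def by (simp add: field_simps)
  obtain T where "finite T" "T \<subseteq> K" and T: "K \<subseteq> (\<Union>c\<in>T. ball c d)"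
    using seq_compact_imp_totally_bounded[OF compact_imp_seq_compact[OF K], rule_format, OF \<open>d > 0\<close>]
    by blast
  have "eventually (\<lambda>n. dist (f n c) (g c) < e / 3) sequentially" if "c \<in> T" for c
    using that \<open>T \<subseteq> K\<close> \<open>e > 0\<close> by (intro tendstoD lim) auto
  then have "eventually (\<lambda>n. \<forall>c\<in>T. dist (f n c) (g c) < e / 3) sequentially"
    by (intro eventually_ball_finite[OF \<open>finite T\<close>] ballI)
  then show "eventually (\<lambda>n. \<forall>x\<in>K. dist (f n x) (g x) < e) sequentially"
  proof (rule eventually_mono, intro ballI)
    fix n x assume near: "\<forall>c\<in>T. dist (f n c) (g c) < e / 3" and "x \<in> K"
    from subsetD[OF T \<open>x \<in> K\<close>] obtain c where "c \<in> T" "dist c x < d" by auto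
    with \<open>T \<subseteq> K\<close> have "c \<in> K" by blast
    have "L * dist c x \<le> L * d"
      using \<open>dist c x < d\<close> \<open>0 \<le> L\<close> by (simp add: mult_left_mono)
    then have "dist (f n x) (f n c) \<le> L * d" "dist (g c) (g x) \<le> L * d"
      using lipschitz_onD[OF lip[of n] \<open>x \<in> K\<close> \<open>c \<in> K\<close>] lipschitz_onD[OF g \<open>c \<in> K\<close> \<open>x \<in> K\<close>]
      by (simp_all add: dist_commute)
    moreover have "dist (f n c) (g c) < e / 3" using near \<open>c \<in> T\<close> by blast
    ultimately show "dist (f n x) (g x) < e"
      using dist_triangle[of "f n x" "g x" "f n c"] dist_triangle[of "f n c" "g x" "g c"]
        \<open>L * d < e / 3\<close> by linarith
  qed
qed

lemma bounded_convergent_subseq_on_countable: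
  fixes f :: "nat \<Rightarrow> 'a \<Rightarrow> real"
  assumes "countable D" and bound: "\<And>n x. x \<in> D \<Longrightarrow> \<bar>f n x\<bar> \<le> c x"
  obtains r where "strict_mono r" and "\<And>x. x \<in> D \<Longrightarrow> convergent (\<lambda>n. f (r n) x)"
proof (cases "D = {}")
  case True
  then show ?thesis using that[of id] by (simp add: strict_mono_id)
next
  case False
  define e where "e = from_nat_into D"
  have rD: "range e = D" unfolding e_def using False \<open>countable D\<close> by simp
  define S where "S = (PiE UNIV (\<lambda>k. {- c (e k) .. c (e k)}) :: (nat \<Rightarrow> real) set)"
  have "compactin (product_topology (\<lambda>k. euclidean) UNIV) S"
    unfolding S_def compactin_PiE by simp
  then have "seq_compact S"
    by (simp add: euclidean_product_topology compact_imp_seq_compact)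
  moreover have "f n (e k) \<in> {- c (e k) .. c (e k)}" for n k
    using bound[of "e k" n] rD by (auto simp: abs_le_iff)
  then have "\<forall>n. (\<lambda>k. f n (e k)) \<in> S"
    unfolding S_def by (simp add: PiE_iff)
  ultimately obtain \<Lambda> r where r: "strict_mono r" and lim: "(\<lambda>n. \<lambda>k. f (r n) (e k)) \<longlonglongrightarrow> \<Lambda>"
    by (auto elim!: seq_compactE simp: o_def)
  have "(\<lambda>n. f (r n) (e k)) \<longlonglongrightarrow> \<Lambda> k" for k
    using continuous_on_tendsto_compose[OF continuous_on_product_coordinates lim] by simp
  then have "convergent (\<lambda>n. f (r n) x)" if "x \<in> D" for x
    using that rD unfolding convergent_def by blast
  with r show ?thesis using that by blast
qed

lemma convergent_if_convergent_on_dense: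
  fixes f :: "nat \<Rightarrow> 'a::metric_space \<Rightarrow> 'b::complete_space" and D :: "'a set"
  assumes "closure D = UNIV" and lip: "\<And>n. L-lipschitz_on UNIV (f n)"
    and conv: "\<And>x. x \<in> D \<Longrightarrow> convergent (\<lambda>n. f n x)"
  shows "convergent (\<lambda>n. f n x)"
proof -
  have "Cauchy (\<lambda>n. f n x)"
    unfolding Cauchy_def
  proof (intro allI impI)
    fix \<epsilon> :: real assume "\<epsilon> > 0"
    have "0 \<le> L" by (rule lipschitz_on_nonneg[OF lip])
    define d where "d = \<epsilon> / (3 * (L + 1))"
    have "d > 0" using \<open>\<epsilon> > 0\<close> \<open>0 \<le> L\<close> unfolding d_def by simp
    have "L * d < \<epsilon> / 3"
      using \<open>\<epsilon> > 0\<close> \<open>0 \<le> L\<close> unfolding d_def by (simp add: field_simps)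
    obtain c where "c \<in> D" "dist x c < d"
      using closure_approachableD[of x D d] \<open>closure D = UNIV\<close> \<open>d > 0\<close> by blast
    then have near: "dist (f n x) (f n c) < \<epsilon> / 3" for n
      using lipschitz_onD[OF lip[of n], of x c] \<open>0 \<le> L\<close> \<open>L * d < \<epsilon> / 3\<close>
        mult_left_mono[of "dist x c" d L] by simp
    obtain M where M: "\<And>m n. m \<ge> M \<Longrightarrow> n \<ge> M \<Longrightarrow> dist (f m c) (f n c) < \<epsilon> / 3"
      using convergent_Cauchy[OF conv[OF \<open>c \<in> D\<close>]] \<open>\<epsilon> > 0\<close> unfolding Cauchy_def
      by (meson divide_pos_pos zero_less_numeral)
    show "\<exists>M. \<forall>m\<ge>M. \<forall>n\<ge>M. dist (f m x) (f n x) < \<epsilon>"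
    proof (intro exI allI impI)
      fix m n assume "M \<le> m" "M \<le> n"
      then show "dist (f m x) (f n x) < \<epsilon>"
        using M[of m n] near[of m] near[of n]
          dist_triangle[of "f m x" "f n x" "f m c"] dist_triangle[of "f m c" "f n x" "f n c"]
        by (simp add: dist_commute)
    qed
  qed
  then show ?thesis by (simp add: Cauchy_convergent_iff)
qed

lemma lipschitz_convergent_subseq:
  fixes f :: "nat \<Rightarrow> 'a::metric_space \<Rightarrow> real" and D :: "'a set"
  assumes "countable D" and "closure D = UNIV"
    and lip: "\<And>n. L-lipschitz_on UNIV (f n)" and bound: "\<And>n. \<bar>f n p\<bar> \<le> B"
  obtains r g where "strict_mono r" and "\<And>x. (\<lambda>n. f (r n) x) \<longlonglongrightarrow> g x"
proof -
  have "\<bar>f n x\<bar> \<le> B + L * dist x p" for n x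
    using lipschitz_onD[OF lip[of n], of x p] bound[of n] by (simp add: dist_real_def)
  then obtain r where r: "strict_mono r" and "\<And>x. x \<in> D \<Longrightarrow> convergent (\<lambda>n. f (r n) x)"
    using bounded_convergent_subseq_on_countable[OF \<open>countable D\<close>, of f "\<lambda>x. B + L * dist x p"]
    by blast
  then have "convergent (\<lambda>n. f (r n) x)" for x
    using convergent_if_convergent_on_dense[OF \<open>closure D = UNIV\<close> lip] by blast
  then show ?thesis
    using that[OF r, of "\<lambda>x. lim (\<lambda>n. f (r n) x)"] by (simp add: convergent_LIMSEQ_iff)
qed

lemma horofunction_approx_busemann:
  assumes "proper_metric TYPE('a::metric_space)" and "h \<in> horofunction_boundary (p::'a)" and "e > 0"
  obtains y where "M \<le> dist p y" and "\<And>x. x \<in> cball p R \<Longrightarrow> \<bar>busemann p y x - h x\<bar> < e"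
proof -
  obtain ys where far: "filterlim (\<lambda>n. dist p (ys n)) at_top sequentially"
    and lim: "\<And>x. (\<lambda>n. busemann p (ys n) x) \<longlonglongrightarrow> h x"
    using horofunction_boundaryE[OF assms(2)] by blast
  have "uniform_limit (cball p R) (\<lambda>n. busemann p (ys n)) h sequentially"
    using compact_cball_proper[OF assms(1)] lipschitz_on_subset[OF lipschitz_busemann] lim
    by (intro uniform_limit_if_lipschitz_pointwise) auto
  from uniform_limitD[OF this \<open>e > 0\<close>]
  have "eventually (\<lambda>n. M \<le> dist p (ys n) \<and> (\<forall>x\<in>cball p R. \<bar>busemann p (ys n) x - h x\<bar> < e))
      sequentially"
    using far unfolding filterlim_at_top by (auto simp: dist_real_def elim: eventually_elim2)
  then obtain n where "M \<le> dist p (ys n)" "\<forall>x\<in>cball p R. \<bar>busemann p (ys n) x - h x\<bar> < e"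
    unfolding eventually_sequentially by blast
  then show ?thesis using that by blast
qed

lemma horofunction_boundary_closed:
  assumes "proper_metric TYPE('a::metric_space)"
    and hk: "\<And>k. hk k \<in> horofunction_boundary (p::'a)" and lim: "\<And>x. (\<lambda>k. hk k x) \<longlonglongrightarrow> h x"
  shows "h \<in> horofunction_boundary p"
proof -
  define P where "P k y \<longleftrightarrow> real k \<le> dist p y \<and>
      (\<forall>x\<in>cball p (real k). \<bar>busemann p y x - hk k x\<bar> < inverse (real (Suc k)))" for k y
  define y where "y k = (SOME y. P k y)" for k
  have "\<exists>y. P k y" for k
    unfolding P_def
    by (rule horofunction_approx_busemann[OF assms(1) hk[of k],
          where e = "inverse (real (Suc k))" and M = "real k" and R = "real k"]) auto
  then have "P k (y k)" for k
    unfolding y_def by (rule someI_ex)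
  then have far: "real k \<le> dist p (y k)"
    and close: "x \<in> cball p (real k) \<Longrightarrow> \<bar>busemann p (y k) x - hk k x\<bar> < inverse (real (Suc k))"
    for k x unfolding P_def by auto
  have "filterlim (\<lambda>k. dist p (y k)) at_top sequentially"
    by (rule filterlim_at_top_mono[OF filterlim_real_sequentially]) (use far in auto)
  moreover have "(\<lambda>k. busemann p (y k) x) \<longlonglongrightarrow> h x" for x
  proof -
    have "eventually (\<lambda>k. norm (busemann p (y k) x - hk k x) \<le> inverse (real (Suc k))) sequentially"
      using eventually_ge_at_top[of "nat \<lceil>dist p x\<rceil>"]
    proof (rule eventually_mono)
      fix k assume "nat \<lceil>dist p x\<rceil> \<le> k"
      then have "x \<in> cball p (real k)" by simp
      then show "norm (busemann p (y k) x - hk k x) \<le> inverse (real (Suc k))"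
        using close by (simp add: less_imp_le)
    qed
    then have "(\<lambda>k. busemann p (y k) x - hk k x) \<longlonglongrightarrow> 0"
      by (rule Lim_null_comparison[OF _ LIMSEQ_inverse_real_of_nat])
    from tendsto_add[OF this lim[of x]] show ?thesis by simp
  qed
  ultimately show ?thesis unfolding horofunction_boundary_def by blast
qed

lemma geodesic_point_busemann:
  assumes "geodesic_metric TYPE('a::metric_space)" and "0 \<le> t" and "t \<le> dist p y"
  obtains w :: "'a::metric_space" where "dist p w = t" and "busemann p y w = - t"
proof -
  obtain \<gamma> :: "real \<Rightarrow> 'a" where "\<gamma> 0 = p" "\<gamma> (dist p y) = y"
    and \<gamma>: "\<And>s u. s \<in> {0..dist p y} \<Longrightarrow> u \<in> {0..dist p y} \<Longrightarrow> dist (\<gamma> s) (\<gamma> u) = \<bar>s - u\<bar>"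
    using assms(1) unfolding geodesic_metric_def by blast
  have "dist p (\<gamma> t) = t" "dist (\<gamma> t) y = dist p y - t"
    using \<gamma>[of 0 t] \<gamma>[of t "dist p y"] assms(2,3) \<open>\<gamma> 0 = p\<close> \<open>\<gamma> (dist p y) = y\<close> by auto
  then show ?thesis using that[of "\<gamma> t"] unfolding busemann_def by simp
qed

lemma horofunction_ray_point:
  assumes "proper_metric TYPE('a::metric_space)" and "geodesic_metric TYPE('a)"
    and "h \<in> horofunction_boundary (p::'a)" and "0 \<le> t"
  obtains z where "dist p z = t" and "h z = - t"
proof -
  obtain y where far: "filterlim (\<lambda>n. dist p (y n)) at_top sequentially"
    and lim: "\<And>x. (\<lambda>n. busemann p (y n) x) \<longlonglongrightarrow> h x"
    using horofunction_boundaryE[OF assms(3)] by blast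
  obtain N where N: "\<And>n. n \<ge> N \<Longrightarrow> t \<le> dist p (y n)"
    using far unfolding filterlim_at_top eventually_sequentially by blast
  define w where "w n = (SOME w. dist p w = t \<and> busemann p (y (n + N)) w = - t)" for n
  have "\<exists>w. dist p w = t \<and> busemann p (y (n + N)) w = - t" for n
    by (rule geodesic_point_busemann[OF assms(2) \<open>0 \<le> t\<close> N[of "n + N"]]) auto
  then have w: "dist p (w n) = t" "busemann p (y (n + N)) (w n) = - t" for n
    unfolding w_def by (metis (mono_tags, lifting) someI_ex)+
  have "seq_compact (cball p t)"
    by (rule compact_imp_seq_compact[OF compact_cball_proper[OF assms(1)]])
  then obtain z r where "z \<in> cball p t" and r: "strict_mono r" and wz: "(w \<circ> r) \<longlonglongrightarrow> z"
    using w(1) by (elim seq_compactE) auto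
  have "(\<lambda>n. dist p (w (r n))) \<longlonglongrightarrow> dist p z"
    using tendsto_dist[OF tendsto_const wz] by (simp add: o_def)
  then have "dist p z = t" using w(1) by (simp add: LIMSEQ_const_iff)
  define Y where "Y n = y (r n + N)" for n
  have "strict_mono (\<lambda>n. r n + N)" using r by (simp add: strict_mono_def)
  from LIMSEQ_subseq_LIMSEQ[OF lim this]
  have "(\<lambda>n. busemann p (Y n) z) \<longlonglongrightarrow> h z" by (simp add: Y_def o_def)
  moreover have "(\<lambda>n. busemann p (Y n) z) \<longlonglongrightarrow> - t"
  proof -
    have le: "norm (busemann p (Y n) z - - t) \<le> dist z (w (r n))" for n
      using lipschitz_onD[OF lipschitz_busemann[of p "y (r n + N)"], of z "w (r n)"] w(2)[of "r n"]
      by (simp add: Y_def dist_real_def)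
    have "(\<lambda>n. dist z (w (r n))) \<longlonglongrightarrow> 0"
      using tendsto_dist[OF tendsto_const wz, of z] by (simp add: o_def)
    then have "(\<lambda>n. busemann p (Y n) z - - t) \<longlonglongrightarrow> 0"
      by (rule Lim_null_comparison[OF always_eventually[OF allI[OF le]]])
    then show ?thesis by (simp only: LIM_zero_iff)
  qed
  ultimately have "h z = - t" by (rule LIMSEQ_unique)
  with \<open>dist p z = t\<close> show ?thesis using that by blast
qed

lemma horofunction_boundary_convergent_subseq:
  fixes hk :: "nat \<Rightarrow> 'a::metric_space \<Rightarrow> real"
  assumes "proper_metric TYPE('a::metric_space)" and hk: "\<And>k. hk k \<in> horofunction_boundary (p::'a)"
  obtains r h where "strict_mono r" and "h \<in> horofunction_boundary p"
    and "\<And>x. (\<lambda>n. hk (r n) x) \<longlonglongrightarrow> h x"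
    and "limitin (horofunction_topology p) (hk \<circ> r) h sequentially"
proof -
  obtain D :: "'a set" where "countable D" "closure D = UNIV"
    using proper_metric_separable[OF assms(1)] by blast
  moreover have lip: "1-lipschitz_on UNIV (hk k)" for k
    by (rule lipschitz_horofunction[OF hk])
  moreover have "\<bar>hk k p\<bar> \<le> 0" for k
    by (simp add: horofunction_basepoint[OF hk])
  ultimately obtain r h where r: "strict_mono r" and lim: "\<And>x. (\<lambda>n. hk (r n) x) \<longlonglongrightarrow> h x"
    by (rule lipschitz_convergent_subseq[where f = hk]) auto
  have H: "h \<in> horofunction_boundary p"
    using horofunction_boundary_closed[OF assms(1) hk lim] .
  have "limitin compact_open_topology (hk \<circ> r) h sequentially"
  proof (rule limitin_compact_open_topology)
    show "continuous_on UNIV h"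
      by (rule lipschitz_on_continuous_on[OF lipschitz_horofunction[OF H]])
    show "uniform_limit K (hk \<circ> r) h sequentially" if "compact K" for K
      using that lim lipschitz_on_subset[OF lip]
      by (intro uniform_limit_if_lipschitz_pointwise) (auto simp: o_def)
  qed
  then have "limitin (horofunction_topology p) (hk \<circ> r) h sequentially"
    unfolding horofunction_topology_def limitin_subtopology using H hk by simp
  with r H lim show ?thesis using that by blast
qed

section \<open>Endpoints of horofunctions in a hyperbolic space\<close>

lemma converges_at_infinity_imp_dist_at_top:
  assumes "converges_at_infinity p x"
  shows "filterlim (\<lambda>n. dist p (x n)) at_top sequentially"
  unfolding filterlim_at_top eventually_sequentially
proof
  fix M
  obtain N where "\<forall>i\<ge>N. \<forall>j\<ge>N. M \<le> gromov_product p (x i) (x j)"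
    using assms unfolding converges_at_infinity_def by blast
  then show "\<exists>N. \<forall>n\<ge>N. M \<le> dist p (x n)" by (metis gromov_product_self)
qed

locale gromov_hyperbolic_space =
  fixes p :: "'a::metric_space" and \<delta> :: real
  assumes delta_nonneg: "0 \<le> \<delta>"
    and four_point: "\<And>w x y z::'a.
      min (gromov_product w x y) (gromov_product w y z) - \<delta> \<le> gromov_product w x z"
begin

abbreviation "H \<equiv> horofunction_boundary p"
abbreviation "gp \<equiv> gromov_product p"
abbreviation "hp \<equiv> horofunction_product p"

lemma gromov_product_four_point_horofunction:
  assumes "h \<in> H"
  shows "min (hp h z) (hp h w) - \<delta> \<le> gp z w"
proof -
  obtain y where y: "\<And>x. (\<lambda>n. busemann p (y n) x) \<longlonglongrightarrow> h x"
    using horofunction_boundaryE[OF assms] by blast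
  have "(\<lambda>n. min (gp z (y n)) (gp w (y n)) - \<delta>) \<longlonglongrightarrow> min (hp h z) (hp h w) - \<delta>"
    by (intro tendsto_intros gromov_product_tendsto_horofunction_product y)
  moreover have "min (gp z (y n)) (gp w (y n)) - \<delta> \<le> gp z w" for n
    using four_point[of p z "y n" w] by (simp add: gromov_product_commute[of p "y n"])
  ultimately show ?thesis by (simp add: LIMSEQ_le_const2)
qed

lemma horofunction_product_four_point:
  assumes "h \<in> H"
  shows "min (gp z w) (hp h w) - \<delta> \<le> hp h z"
proof -
  obtain y where y: "\<And>x. (\<lambda>n. busemann p (y n) x) \<longlonglongrightarrow> h x"
    using horofunction_boundaryE[OF assms] by blast
  have "(\<lambda>n. min (gp z w) (gp w (y n)) - \<delta>) \<longlonglongrightarrow> min (gp z w) (hp h w) - \<delta>"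
    by (intro tendsto_intros gromov_product_tendsto_horofunction_product y)
  moreover have "(\<lambda>n. gp z (y n)) \<longlonglongrightarrow> hp h z"
    by (rule gromov_product_tendsto_horofunction_product[OF y])
  moreover have "\<forall>n. min (gp z w) (gp w (y n)) - \<delta> \<le> gp z (y n)"
    using four_point[of p z w] by blast
  ultimately show ?thesis by (blast intro: LIMSEQ_le)
qed

lemma horofunction_product_diff_le:
  assumes "h \<in> H" and "h' \<in> H"
    and "filterlim (\<lambda>i. hp h (x i)) at_top sequentially"
    and "filterlim (\<lambda>i. hp h' (x i)) at_top sequentially"
  shows "hp h' z - 2 * \<delta> \<le> hp h z"
proof -
  have "eventually (\<lambda>i. hp h' z \<le> hp h (x i) \<and> hp h' z \<le> hp h' (x i)) sequentially"
    using assms(3,4)[unfolded filterlim_at_top, THEN spec[of _ "hp h' z"]] by (rule eventually_conj)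
  then obtain i where i: "hp h' z \<le> hp h (x i)" "hp h' z \<le> hp h' (x i)"
    unfolding eventually_sequentially by blast
  have "hp h' z - \<delta> \<le> gp z (x i)"
    using gromov_product_four_point_horofunction[OF assms(2), of z "x i"] i(2) by simp
  then show ?thesis
    using horofunction_product_four_point[OF assms(1), of z "x i"] i(1) delta_nonneg
    unfolding min_def by (auto split: if_splits)
qed

definition endpoint :: "('a \<Rightarrow> real) \<Rightarrow> (nat \<Rightarrow> 'a) set" where
  "endpoint h = {x. converges_at_infinity p x \<and> filterlim (\<lambda>i. hp h (x i)) at_top sequentially}"

lemma endpoint_eq_gromov_class:
  assumes "h \<in> H" and "x \<in> endpoint h"
  shows "endpoint h = {y. converges_at_infinity p y \<and> seq_equiv p x y}"
proof -
  have x: "\<forall>M. \<exists>N. \<forall>i\<ge>N. M \<le> hp h (x i)"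
    using assms(2) unfolding endpoint_def filterlim_at_top eventually_sequentially by blast
  have "seq_equiv p x y" if y: "filterlim (\<lambda>j. hp h (y j)) at_top sequentially" for y
    unfolding seq_equiv_def
  proof
    fix M
    obtain N1 where N1: "\<And>i. i \<ge> N1 \<Longrightarrow> M + \<delta> \<le> hp h (x i)"
      using x by blast
    obtain N2 where N2: "\<And>j. j \<ge> N2 \<Longrightarrow> M + \<delta> \<le> hp h (y j)"
      using y unfolding filterlim_at_top eventually_sequentially by blast
    show "\<exists>N. \<forall>i\<ge>N. \<forall>j\<ge>N. M \<le> gp (x i) (y j)"
    proof (intro exI allI impI)
      fix i j assume "max N1 N2 \<le> i" "max N1 N2 \<le> j"
      then show "M \<le> gp (x i) (y j)"
        using gromov_product_four_point_horofunction[OF assms(1), of "x i" "y j"] N1[of i] N2[of j]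
        by linarith
    qed
  qed
  moreover have "filterlim (\<lambda>j. hp h (y j)) at_top sequentially" if y: "seq_equiv p x y" for y
    unfolding filterlim_at_top eventually_sequentially
  proof
    fix M
    obtain N where N: "\<And>i j. i \<ge> N \<Longrightarrow> j \<ge> N \<Longrightarrow> M + \<delta> \<le> gp (x i) (y j)"
      using y unfolding seq_equiv_def by blast
    obtain N1 where N1: "\<And>i. i \<ge> N1 \<Longrightarrow> M + \<delta> \<le> hp h (x i)"
      using x by blast
    show "\<exists>N'. \<forall>j\<ge>N'. M \<le> hp h (y j)"
    proof (intro exI allI impI)
      fix j assume "N \<le> j"
      define i where "i = max N N1"
      have "M + \<delta> \<le> gp (y j) (x i)" "M + \<delta> \<le> hp h (x i)"
        using N[of i j] N1[of i] \<open>N \<le> j\<close> gromov_product_commute[of p "y j"]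
        unfolding i_def by auto
      then show "M \<le> hp h (y j)"
        using horofunction_product_four_point[OF assms(1), of "y j" "x i"]
        unfolding min_def by (auto split: if_splits)
    qed
  qed
  ultimately show ?thesis
    using assms(2) unfolding endpoint_def by blast
qed

lemma endpoint_in_gromov_boundaryI:
  assumes "h \<in> H" and "x \<in> endpoint h"
  shows "endpoint h \<in> gromov_boundary p"
  using assms endpoint_eq_gromov_class unfolding gromov_boundary_def endpoint_def by blast

lemma endpoint_eq_if_common:
  assumes "h \<in> H" "h' \<in> H" and "x \<in> endpoint h" "x \<in> endpoint h'"
  shows "endpoint h = endpoint h'"
  using endpoint_eq_gromov_class assms by metis

lemma horofunction_diff_le_if_common_endpoint:
  assumes "h \<in> H" "h' \<in> H" and "x \<in> endpoint h" "x \<in> endpoint h'"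
  shows "\<bar>h z - h' z\<bar> \<le> 4 * \<delta>"
proof -
  have "filterlim (\<lambda>i. hp h (x i)) at_top sequentially" "filterlim (\<lambda>i. hp h' (x i)) at_top sequentially"
    using assms(3,4) unfolding endpoint_def by auto
  then have "hp h' z - 2 * \<delta> \<le> hp h z" "hp h z - 2 * \<delta> \<le> hp h' z"
    using horofunction_product_diff_le assms(1,2) by blast+
  then show ?thesis unfolding horofunction_product_def by (simp add: abs_le_iff field_simps)
qed

lemma endpoint_in_gromov_nbhd:
  assumes "h \<in> H" "h' \<in> H" and x: "x \<in> endpoint h" and y: "y \<in> endpoint h'"
  shows "endpoint h' \<in> gromov_nbhd p (endpoint h) (min (hp h w) (hp h' w) - 2 * \<delta>)"
proof -
  have "eventually (\<lambda>i. hp h w \<le> hp h (x i) \<and> hp h' w \<le> hp h' (y i)) sequentially"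
    using x y unfolding endpoint_def filterlim_at_top by (auto intro: eventually_conj)
  then obtain N where N: "\<And>i. i \<ge> N \<Longrightarrow> hp h w \<le> hp h (x i)"
    "\<And>j. j \<ge> N \<Longrightarrow> hp h' w \<le> hp h' (y j)"
    unfolding eventually_sequentially by blast
  have "min (hp h w) (hp h' w) - 2 * \<delta> \<le> gp (x i) (y j)" if "i \<ge> N" "j \<ge> N" for i j
  proof -
    have "hp h w - \<delta> \<le> gp (x i) w"
      using gromov_product_four_point_horofunction[OF assms(1), of "x i" w] N(1)[OF \<open>i \<ge> N\<close>]
      by (simp add: min.absorb2)
    moreover have "hp h' w - \<delta> \<le> gp w (y j)"
      using gromov_product_four_point_horofunction[OF assms(2), of w "y j"] N(2)[OF \<open>j \<ge> N\<close>]
      by (simp add: min.absorb1)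
    ultimately show ?thesis
      using four_point[of p "x i" w "y j"] unfolding min_def by (auto split: if_splits)
  qed
  then have "\<forall>\<epsilon>>0. \<exists>N. \<forall>i\<ge>N. \<forall>j\<ge>N. min (hp h w) (hp h' w) - 2 * \<delta> - \<epsilon> \<le> gp (x i) (y j)"
    by (intro allI impI exI[of _ N]) force
  then show ?thesis
    using endpoint_in_gromov_boundaryI[OF assms(2) y] x y unfolding gromov_nbhd_def by blast
qed

lemma horofunction_product_ge_if_gromov_nbhd:
  assumes "h \<in> H" "h' \<in> H" and "endpoint h' \<in> gromov_nbhd p (endpoint h) K"
  shows "min K (hp h w) - 3 * \<delta> - 1 \<le> hp h' w"
proof -
  obtain x y where x: "x \<in> endpoint h" and y: "y \<in> endpoint h'"
    and "\<forall>\<epsilon>>0. \<exists>N. \<forall>i\<ge>N. \<forall>j\<ge>N. K - \<epsilon> \<le> gp (x i) (y j)"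
    using assms(3) unfolding gromov_nbhd_def by blast
  then have xy: "\<exists>N. \<forall>i\<ge>N. \<forall>j\<ge>N. K - 1 \<le> gp (x i) (y j)" by simp
  have "eventually (\<lambda>i. hp h w \<le> hp h (x i) \<and> hp h w \<le> hp h' (y i)) sequentially"
    using x y unfolding endpoint_def filterlim_at_top by (auto intro: eventually_conj)
  then obtain N1 where N1: "\<And>i. i \<ge> N1 \<Longrightarrow> hp h w \<le> hp h (x i) \<and> hp h w \<le> hp h' (y i)"
    unfolding eventually_sequentially by blast
  obtain N0 where N0: "\<And>i j. i \<ge> N0 \<Longrightarrow> j \<ge> N0 \<Longrightarrow> K - 1 \<le> gp (x i) (y j)"
    using xy by blast
  define N where "N = max N0 N1"
  have N: "K - 1 \<le> gp (x N) (y N)" "hp h w \<le> hp h (x N)" "hp h w \<le> hp h' (y N)"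
    using N0[of N N] N1[of N] unfolding N_def by auto
  have "hp h w - \<delta> \<le> gp w (x N)"
    using gromov_product_four_point_horofunction[OF assms(1), of w "x N"] N(2)
    by (simp add: min.absorb1)
  then have "min K (hp h w) - 2 * \<delta> - 1 \<le> gp w (y N)"
    using four_point[of p w "x N" "y N"] N(1) delta_nonneg
    unfolding min_def by (auto split: if_splits)
  then show ?thesis
    using horofunction_product_four_point[OF assms(2), of w "y N"] N(3) delta_nonneg
    unfolding min_def by (auto split: if_splits)
qed

end

locale proper_geodesic_hyperbolic_space = gromov_hyperbolic_space +
  assumes proper: "proper_metric TYPE('a)" and geodesic: "geodesic_metric TYPE('a)"
begin

definition ray :: "('a \<Rightarrow> real) \<Rightarrow> nat \<Rightarrow> 'a" where
  "ray h i = (SOME z. dist p z = real i \<and> h z = - real i)"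

lemma ray:
  assumes "h \<in> H"
  shows "dist p (ray h i) = real i" and "h (ray h i) = - real i"
proof -
  have "\<exists>z. dist p z = real i \<and> h z = - real i"
    by (rule horofunction_ray_point[OF proper geodesic assms, of "real i"]) auto
  from someI_ex[OF this] show "dist p (ray h i) = real i" "h (ray h i) = - real i"
    unfolding ray_def by auto
qed

lemma horofunction_product_ray:
  assumes "h \<in> H"
  shows "hp h (ray h i) = real i"
  using ray[OF assms, of i] unfolding horofunction_product_def by simp

lemma ray_in_endpoint:
  assumes "h \<in> H"
  shows "ray h \<in> endpoint h"
proof -
  have "converges_at_infinity p (ray h)"
    unfolding converges_at_infinity_def
  proof
    fix M
    show "\<exists>N. \<forall>i\<ge>N. \<forall>j\<ge>N. M \<le> gp (ray h i) (ray h j)"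
    proof (intro exI allI impI)
      fix i j assume "nat \<lceil>M + \<delta>\<rceil> \<le> i" "nat \<lceil>M + \<delta>\<rceil> \<le> j"
      then show "M \<le> gp (ray h i) (ray h j)"
        using gromov_product_four_point_horofunction[OF assms, of "ray h i" "ray h j"]
        by (simp add: horofunction_product_ray[OF assms])
    qed
  qed
  then show ?thesis
    by (simp add: endpoint_def horofunction_product_ray[OF assms] filterlim_real_sequentially)
qed

lemma endpoint_in_gromov_boundary: "h \<in> H \<Longrightarrow> endpoint h \<in> gromov_boundary p"
  using endpoint_in_gromov_boundaryI ray_in_endpoint by blast

lemma endpoint_eq_iff_sublinear_equiv:
  assumes h: "h \<in> H" and h': "h' \<in> H"
  shows "sublinear_equiv p h h' \<longleftrightarrow> endpoint h = endpoint h'"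
proof
  assume "endpoint h = endpoint h'"
  then have "ray h \<in> endpoint h'" using ray_in_endpoint[OF h] by simp
  then have "\<bar>h z - h' z\<bar> \<le> 4 * \<delta>" for z
    by (rule horofunction_diff_le_if_common_endpoint[OF h h' ray_in_endpoint[OF h]])
  then show "sublinear_equiv p h h'" by (rule sublinear_equiv_if_bounded_diff)
next
  assume "sublinear_equiv p h h'"
  then obtain N where N: "\<And>n x. n \<ge> N \<Longrightarrow> real n \<le> dist p x \<Longrightarrow> \<bar>h x - h' x\<bar> / dist p x \<le> 1"
    unfolding sublinear_equiv_def by (meson zero_less_one)
  have "1 / 2 * real i \<le> hp h' (ray h i)" if "max N 1 \<le> i" for i
  proof -
    have "\<bar>h (ray h i) - h' (ray h i)\<bar> \<le> real i"
      using N[of i "ray h i"] ray[OF h, of i] that by (simp add: divide_le_eq)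
    then show ?thesis using ray[OF h, of i] unfolding horofunction_product_def by simp
  qed
  then have "eventually (\<lambda>i. 1 / 2 * real i \<le> hp h' (ray h i)) sequentially"
    unfolding eventually_sequentially by blast
  moreover have "filterlim (\<lambda>i. 1 / 2 * real i) at_top sequentially"
    by (rule filterlim_tendsto_pos_mult_at_top[OF tendsto_const _ filterlim_real_sequentially]) simp
  ultimately have "filterlim (\<lambda>i. hp h' (ray h i)) at_top sequentially"
    by (rule filterlim_at_top_mono[rotated])
  then have "ray h \<in> endpoint h'"
    using ray_in_endpoint[OF h] unfolding endpoint_def by blast
  then show "endpoint h = endpoint h'"
    by (rule endpoint_eq_if_common[OF h h' ray_in_endpoint[OF h]])
qed

lemma endpoint_surj:
  assumes "\<xi> \<in> gromov_boundary p"
  obtains h where "h \<in> H" and "endpoint h = \<xi>"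
proof -
  obtain x where x: "converges_at_infinity p x"
    and \<xi>: "\<xi> = {y. converges_at_infinity p y \<and> seq_equiv p x y}"
    using assms unfolding gromov_boundary_def by blast
  obtain D :: "'a set" where "countable D" "closure D = UNIV"
    using proper_metric_separable[OF proper] by blast
  then obtain r h where r: "strict_mono r" and lim: "\<And>z. (\<lambda>n. busemann p (x (r n)) z) \<longlonglongrightarrow> h z"
    by (rule lipschitz_convergent_subseq[where f = "\<lambda>n. busemann p (x n)" and p = p and B = 0,
          OF _ _ lipschitz_busemann]) auto
  have "filterlim (\<lambda>n. dist p (x (r n))) at_top sequentially"
    by (rule filterlim_compose[OF converges_at_infinity_imp_dist_at_top[OF x] filterlim_subseq[OF r]])
  then have "h \<in> H"
    using lim unfolding horofunction_boundary_def by (intro CollectI exI[of _ "\<lambda>n. x (r n)"]) simp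
  have "filterlim (\<lambda>i. hp h (x i)) at_top sequentially"
    unfolding filterlim_at_top eventually_sequentially
  proof
    fix M
    obtain N where N: "\<And>i j. i \<ge> N \<Longrightarrow> j \<ge> N \<Longrightarrow> M \<le> gp (x i) (x j)"
      using x unfolding converges_at_infinity_def by blast
    show "\<exists>N. \<forall>i\<ge>N. M \<le> hp h (x i)"
    proof (intro exI allI impI)
      fix i assume "N \<le> i"
      have "(\<lambda>n. gp (x i) (x (r n))) \<longlonglongrightarrow> hp h (x i)"
        by (rule gromov_product_tendsto_horofunction_product[OF lim])
      moreover have "eventually (\<lambda>n. M \<le> gp (x i) (x (r n))) sequentially"
        using eventually_ge_at_top[of N]
        by (rule eventually_mono) (use N \<open>N \<le> i\<close> seq_suble[OF r] le_trans in blast)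
      ultimately show "M \<le> hp h (x i)" by (rule tendsto_lowerbound) simp
    qed
  qed
  then have "x \<in> endpoint h" using x unfolding endpoint_def by blast
  then have "endpoint h = \<xi>" using endpoint_eq_gromov_class[OF \<open>h \<in> H\<close>] \<xi> by blast
  with \<open>h \<in> H\<close> show ?thesis using that by blast
qed

lemma openin_endpoint_preimage:
  assumes "openin (gromov_boundary_topology p) U"
  shows "openin (horofunction_topology p) {h \<in> H. endpoint h \<in> U}"
  unfolding openin_subopen[of _ "{h \<in> H. endpoint h \<in> U}"]
proof
  fix h assume h: "h \<in> {h \<in> H. endpoint h \<in> U}"
  then have "h \<in> H" by simp
  from h obtain r where r: "gromov_nbhd p (endpoint h) r \<subseteq> U"
    using assms unfolding openin_gromov_boundary_topology by blast
  define w where "w = ray h (nat \<lceil>r + 1 + 2 * \<delta>\<rceil>)"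
  define T where "T = H \<inter> {f. f w \<in> ball (h w) 1}"
  have "openin (horofunction_topology p) T"
    unfolding T_def horofunction_topology_def
    by (intro openin_subtopology_Int2 openin_compact_open_topology_eval open_ball)
  moreover have "h \<in> T" unfolding T_def using \<open>h \<in> H\<close> by simp
  moreover have "T \<subseteq> {h \<in> H. endpoint h \<in> U}"
  proof
    fix h' assume "h' \<in> T"
    then have "h' \<in> H" and "\<bar>h' w - h w\<bar> < 1" unfolding T_def by (auto simp: dist_real_def)
    have "r + 1 + 2 * \<delta> \<le> hp h w"
      unfolding w_def horofunction_product_ray[OF \<open>h \<in> H\<close>] by linarith
    moreover have "hp h w - 1 / 2 < hp h' w"
      using \<open>\<bar>h' w - h w\<bar> < 1\<close> unfolding horofunction_product_def
      by (simp add: abs_less_iff field_simps)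
    ultimately have "r \<le> min (hp h w) (hp h' w) - 2 * \<delta>" by linarith
    moreover have "endpoint h' \<in> gromov_nbhd p (endpoint h) (min (hp h w) (hp h' w) - 2 * \<delta>)"
      using endpoint_in_gromov_nbhd[OF \<open>h \<in> H\<close> \<open>h' \<in> H\<close> ray_in_endpoint ray_in_endpoint]
        \<open>h \<in> H\<close> \<open>h' \<in> H\<close> by blast
    ultimately show "h' \<in> {h \<in> H. endpoint h \<in> U}"
      using r gromov_nbhd_mono \<open>h' \<in> H\<close> by blast
  qed
  ultimately show "\<exists>T. openin (horofunction_topology p) T \<and> h \<in> T \<and> T \<subseteq> {h \<in> H. endpoint h \<in> U}"
    by blast
qed

lemma endpoint_eq_if_gromov_nbhd_limit:
  assumes h: "h \<in> H" and "hs \<in> H" and hk: "\<And>n. hk n \<in> H"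
    and nbhd: "\<And>n. endpoint (hk n) \<in> gromov_nbhd p (endpoint h) (real n)"
    and lim: "\<And>x. (\<lambda>n. hk n x) \<longlonglongrightarrow> hs x"
  shows "endpoint hs = endpoint h"
proof -
  have "- 3 * \<delta> - 1 + real m \<le> hp hs (ray h m)" for m
  proof -
    have "(\<lambda>n. hp (hk n) (ray h m)) \<longlonglongrightarrow> hp hs (ray h m)"
      unfolding horofunction_product_def by (auto intro!: tendsto_intros lim)
    moreover have "eventually (\<lambda>n. - 3 * \<delta> - 1 + real m \<le> hp (hk n) (ray h m)) sequentially"
      using eventually_ge_at_top[of m]
    proof (rule eventually_mono)
      fix n assume "m \<le> n"
      then show "- 3 * \<delta> - 1 + real m \<le> hp (hk n) (ray h m)"
        using horofunction_product_ge_if_gromov_nbhd[OF h hk nbhd, of n "ray h m"]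
        by (simp add: horofunction_product_ray[OF h])
    qed
    ultimately show ?thesis by (rule tendsto_lowerbound) simp
  qed
  then have "filterlim (\<lambda>m. hp hs (ray h m)) at_top sequentially"
    by (intro filterlim_at_top_mono[OF filterlim_tendsto_add_at_top
          [OF tendsto_const filterlim_real_sequentially]] always_eventually allI)
  then have "ray h \<in> endpoint hs"
    using ray_in_endpoint[OF h] unfolding endpoint_def by blast
  then show ?thesis by (rule endpoint_eq_if_common[OF \<open>hs \<in> H\<close> h _ ray_in_endpoint[OF h]])
qed

lemma endpoint_preimage_openin_imp_gromov_nbhd:
  assumes V: "openin (horofunction_topology p) {h \<in> H. endpoint h \<in> U}"
    and h: "h \<in> H" "endpoint h \<in> U"
  obtains n :: nat where "\<And>h'. h' \<in> H \<Longrightarrow> endpoint h' \<in> gromov_nbhd p (endpoint h) (real n) \<Longrightarrow>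
      endpoint h' \<in> U"
proof (rule ccontr)
  assume "\<not> thesis"
  then have "\<exists>h'. h' \<in> H \<and> endpoint h' \<in> gromov_nbhd p (endpoint h) (real n) \<and> endpoint h' \<notin> U"
    for n using that by blast
  then obtain hk where hk: "\<And>n. hk n \<in> H" "\<And>n. endpoint (hk n) \<in> gromov_nbhd p (endpoint h) (real n)"
    "\<And>n. endpoint (hk n) \<notin> U"
    using choice[of "\<lambda>n h'. h' \<in> H \<and> endpoint h' \<in> gromov_nbhd p (endpoint h) (real n) \<and> endpoint h' \<notin> U"]
    by blast
  obtain r hs where r: "strict_mono r" and "hs \<in> H" and lim: "\<And>x. (\<lambda>n. hk (r n) x) \<longlonglongrightarrow> hs x"
    and hs: "limitin (horofunction_topology p) (hk \<circ> r) hs sequentially"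
    by (rule horofunction_boundary_convergent_subseq[where hk = hk, OF proper hk(1)]) blast
  have "endpoint (hk (r n)) \<in> gromov_nbhd p (endpoint h) (real n)" for n
  proof -
    have "gromov_nbhd p (endpoint h) (real (r n)) \<subseteq> gromov_nbhd p (endpoint h) (real n)"
      using seq_suble[OF r, of n] by (intro gromov_nbhd_mono) simp
    then show ?thesis using hk(2)[of "r n"] by blast
  qed
  then have "endpoint hs = endpoint h"
    by (rule endpoint_eq_if_gromov_nbhd_limit[OF h(1) \<open>hs \<in> H\<close> hk(1) _ lim])
  then have "hs \<in> {h \<in> H. endpoint h \<in> U}" using h \<open>hs \<in> H\<close> by simp
  then have "eventually (\<lambda>n. (hk \<circ> r) n \<in> {h \<in> H. endpoint h \<in> U}) sequentially"
    using hs V unfolding limitin_def by blast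
  then show False using hk(3) by (auto simp: eventually_sequentially)
qed

lemma openin_if_openin_endpoint_preimage:
  assumes "U \<subseteq> gromov_boundary p" and "openin (horofunction_topology p) {h \<in> H. endpoint h \<in> U}"
  shows "openin (gromov_boundary_topology p) U"
  unfolding openin_gromov_boundary_topology
proof (intro conjI ballI)
  show "U \<subseteq> gromov_boundary p" by fact
  fix \<xi> assume "\<xi> \<in> U"
  then obtain h where h: "h \<in> H" "endpoint h = \<xi>" using endpoint_surj assms(1) by blast
  then obtain n :: nat where n: "\<And>h'. h' \<in> H \<Longrightarrow> endpoint h' \<in> gromov_nbhd p \<xi> (real n) \<Longrightarrow>
      endpoint h' \<in> U"
    using endpoint_preimage_openin_imp_gromov_nbhd[OF assms(2)] \<open>\<xi> \<in> U\<close> by blast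
  have "\<eta> \<in> U" if \<eta>: "\<eta> \<in> gromov_nbhd p \<xi> (real n)" for \<eta>
  proof -
    obtain h' where "h' \<in> H" "endpoint h' = \<eta>"
      using \<eta> unfolding gromov_nbhd_def by (blast elim: endpoint_surj)
    with n \<eta> show ?thesis by blast
  qed
  then show "\<exists>r. gromov_nbhd p \<xi> r \<subseteq> U" by blast
qed

lemma quotient_map_endpoint:
  "quotient_map (horofunction_topology p) (gromov_boundary_topology p) endpoint"
  unfolding quotient_map_def topspace_horofunction_topology topspace_gromov_boundary_topology
proof (intro conjI allI impI)
  show "endpoint ` H = gromov_boundary p"
    using endpoint_in_gromov_boundary by (blast elim: endpoint_surj)
  show "openin (horofunction_topology p) {h \<in> H. endpoint h \<in> U} \<longleftrightarrow>
      openin (gromov_boundary_topology p) U" if "U \<subseteq> gromov_boundary p" for U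
    using that openin_endpoint_preimage openin_if_openin_endpoint_preimage by blast
qed

end

theorem corollary2p7:
  fixes p :: "'a::metric_space"
  assumes "proper_metric TYPE('a)"
    and "geodesic_metric TYPE('a)"
    and "gromov_hyperbolic TYPE('a)"
  shows "quotient_topology (horofunction_topology p) (sublinear_equiv p)
           homeomorphic_space gromov_boundary_topology p"
proof -
  obtain \<delta> where "0 \<le> \<delta>"
    and "\<forall>w x y z::'a. min (gromov_product w x y) (gromov_product w y z) - \<delta> \<le> gromov_product w x z"
    using assms(3) unfolding gromov_hyperbolic_def by blast
  then interpret proper_geodesic_hyperbolic_space p \<delta>
    using assms(1,2) by unfold_locales auto
  show ?thesis
    by (rule quotient_topology_homeomorphic_space[OF quotient_map_endpoint])
      (simp add: endpoint_eq_iff_sublinear_equiv)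
qed

end
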